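(* Let $(M,+)$ be an Abelian semigroup, $\mathcal A_0=\{\theta\in\mathbb N_0^n:\theta\le1\}$, $h:\mathcal A_0\to M$ and $\alpha\in\mathcal A_0$. If $1-\alpha$ is even, then $$\sum_{\mathrm{ev}\,\theta\le\alpha}h(1-\alpha+\theta)+\sum_{\mathrm{od}\,\beta\le1-\alpha}\ \sum_{\mathrm{ev}\,\theta\le\alpha+\beta}h(\theta)=\sum_{\mathrm{ev}\,\beta\le1-\alpha}\ \sum_{\mathrm{ev}\,\theta\le\alpha+\beta}h(\theta),$$ $$\sum_{\mathrm{od}\,\theta\le\alpha}h(1-\alpha+\theta)+\sum_{\mathrm{od}\,\beta\le1-\alpha}\ \sum_{\mathrm{od}\,\theta\le\alpha+\beta}h(\theta)=\sum_{\mathrm{ev}\,\beta\le1-\alpha}\ \sum_{\mathrm{od}\,\theta\le\alpha+\beta}h(\theta);$$ and if $1-\alpha$ is odd, then $$\sum_{\substack{\theta\ \mathrm{even}\\ 1-\alpha\le\theta\le1}}h(\theta)+\sum_{\mathrm{ev}\,\beta\le1-\alpha}\ \sum_{\mathrm{ev}\,\theta\le\alpha+\beta}h(\theta)=\sum_{\mathrm{od}\,\beta\le1-\alpha}\ \sum_{\mathrm{ev}\,\theta\le\alpha+\beta}h(\theta),$$ $$\sum_{\substack{\theta\ \mathrm{odd}\\ 1-\alpha\le\theta\le1}}h(\theta)+\sum_{\mathrm{ev}\,\beta\le1-\alpha}\ \sum_{\mathrm{od}\,\theta\le\alpha+\beta}h(\theta)=\sum_{\mathrm{od}\,\beta\le1-\alpha}\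 \sum_{\mathrm{od}\,\theta\le\alpha+\beta}h(\theta).$$
   Context: Inequalities between multiindices in $\mathbb N_0^n$ are componentwise; $|\theta|=\theta_1+\dots+\theta_n$; $0$ and $1$ denote $(0,\dots,0)$ and $(1,\dots,1)$. A multiindex $\theta$ with $0\le\theta\le1$ is even (odd) if $|\theta|$ is even (odd); in particular $0$ is even. $\sum_{\mathrm{ev}\,\theta\le\alpha}$ ($\sum_{\mathrm{od}\,\theta\le\alpha}$) denotes the sum over even (odd) $\theta$ with $\theta\le\alpha$. Empty sums and omitted terms are dropped from an expression (no zero element is assumed); an equality both of whose sides are empty is regarded as trivially true. *)

theory Defs
  imports Main
begin

text \<open>Multiindices in N_0^n are represented as functions nat \<Rightarrow> nat vanishing
outside {..<n}; the order is the pointwise (componentwise) order le_fun.\<close>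

definition mabs :: "nat \<Rightarrow> (nat \<Rightarrow> nat) \<Rightarrow> nat" where
  "mabs n \<theta> = (\<Sum>i<n. \<theta> i)"

definition mone :: "nat \<Rightarrow> nat \<Rightarrow> nat" where
  "mone n = (\<lambda>i. if i < n then 1 else 0)"

definition A0 :: "nat \<Rightarrow> (nat \<Rightarrow> nat) set" where
  "A0 n = {\<theta>. \<theta> \<le> mone n}"

definition mcompl :: "nat \<Rightarrow> (nat \<Rightarrow> nat) \<Rightarrow> nat \<Rightarrow> nat" where
  "mcompl n \<alpha> = (\<lambda>i. mone n i - \<alpha> i)"

definition madd :: "(nat \<Rightarrow> nat) \<Rightarrow> (nat \<Rightarrow> nat) \<Rightarrow> nat \<Rightarrow> nat" where
  "madd \<alpha> \<beta> = (\<lambda>i. \<alpha> i + \<beta> i)"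

definition ev_le :: "nat \<Rightarrow> (nat \<Rightarrow> nat) \<Rightarrow> (nat \<Rightarrow> nat) set" where
  "ev_le n \<alpha> = {\<theta>. \<theta> \<le> \<alpha> \<and> even (mabs n \<theta>)}"

definition od_le :: "nat \<Rightarrow> (nat \<Rightarrow> nat) \<Rightarrow> (nat \<Rightarrow> nat) set" where
  "od_le n \<alpha> = {\<theta>. \<theta> \<le> \<alpha> \<and> odd (mabs n \<theta>)}"

text \<open>Sums in an abelian semigroup (no zero): an empty sum is represented by None,
and None is neutral for the lifted addition, so "empty sums are dropped".\<close>
definition opl :: "'a::ab_semigroup_add option \<Rightarrow> 'a option \<Rightarrow> 'a option" where
  "opl x y = (case x of None \<Rightarrow> y | Some a \<Rightarrow> (case y of None \<Rightarrow> Some a | Some b \<Rightarrow> Some (a + b)))"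

definition psum :: "('b \<Rightarrow> 'a::ab_semigroup_add option) \<Rightarrow> 'b set \<Rightarrow> 'a option" where
  "psum f A = Finite_Set.fold (\<lambda>x acc. opl (f x) acc) None A"

definition hsum :: "('b \<Rightarrow> 'a::ab_semigroup_add) \<Rightarrow> 'b set \<Rightarrow> 'a option" where
  "hsum h A = psum (\<lambda>x. Some (h x)) A"

end

theory Submission
  imports Defs
begin

text \<open>
  Put c = 1 - \<alpha> and let Q be the parity (even or odd) of the inner
  summation index.  Exchanging the order of summation, each double sum
  \<Sum>_{\<beta> \<le> c, |\<beta>| of parity r} \<Sum>_{\<theta> \<le> \<alpha>+\<beta>, Q |\<theta>|} h(\<theta>) becomes a sum over
  \<theta> \<le> 1 with Q |\<theta>|, where h(\<theta>) occurs once for every \<beta> in the fibre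
  {\<beta> \<le> c. |\<beta>| of parity r, \<theta> \<le> \<alpha>+\<beta>}.  If c \<le> \<theta> this fibre is {c}, so
  h(\<theta>) occurs only in the sum whose parity is that of |c|.  Otherwise some
  coordinate j has c_j = 1 and \<theta>_j = 0, and flipping \<beta>_j is an involution
  exchanging the even and the odd part of the fibre, so h(\<theta>) occurs equally
  often in both sums.  This yields one identity (double_sum_parity_identity)
  covering all four claims; for even |c| its first summand is rewritten by
  the shift \<theta> \<mapsto> c + \<theta>, which preserves parity (shift_sum).
\<close>

interpretation osum: comm_monoid_set "opl :: 'a::ab_semigroup_add option \<Rightarrow> _" None
  by unfold_locales (auto simp: opl_def ac_simps split: option.splits)

lemma psum_eq_osum: "psum f A = osum.F f A"
  by (simp add: psum_def osum.eq_fold comp_def)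

lemma hsum_eq_osum: "hsum h A = osum.F (\<lambda>x. Some (h x)) A"
  by (simp add: hsum_def psum_eq_osum)

lemma A0_iff: "\<theta> \<in> A0 n \<longleftrightarrow> (\<forall>i. \<theta> i \<le> (if i < n then 1 else 0))"
  by (simp add: A0_def le_fun_def mone_def)

lemma finite_A0: "finite (A0 n)"
proof (rule inj_on_finite[where f = "\<lambda>\<theta>. {i. \<theta> i = 1}" and B = "Pow {..<n}"])
  show "inj_on (\<lambda>\<theta>. {i. \<theta> i = 1}) (A0 n)"
  proof (rule inj_onI, rule ext)
    fix x y i assume "x \<in> A0 n" "y \<in> A0 n" "{i. x i = 1} = {i. y i = 1}"
    then have "x i \<le> 1" "y i \<le> 1" "x i = 1 \<longleftrightarrow> y i = 1"
      by (auto simp: A0_iff split: if_splits dest!: spec[of _ i])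
    then show "x i = y i" by linarith
  qed
  show "(\<lambda>\<theta>. {i. \<theta> i = 1}) ` A0 n \<subseteq> Pow {..<n}"
    by (auto simp: A0_iff dest!: spec split: if_splits)
qed simp

lemma finite_below_A0: "\<gamma> \<in> A0 n \<Longrightarrow> finite {\<theta>. \<theta> \<le> \<gamma> \<and> P \<theta>}"
  by (rule finite_subset[OF _ finite_A0[of n]]) (auto simp: A0_def intro: order_trans)

lemma mcompl_A0: "mcompl n \<alpha> \<in> A0 n"
  by (simp add: A0_iff mcompl_def mone_def)

lemma madd_mcompl: "\<alpha> \<in> A0 n \<Longrightarrow> madd \<alpha> (mcompl n \<alpha>) = mone n"
  by (rule ext) (auto simp: A0_iff madd_def mcompl_def mone_def dest!: spec)

lemma madd_mono: "\<beta> \<le> \<gamma> \<Longrightarrow> madd \<alpha> \<beta> \<le> madd \<alpha> \<gamma>"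
  by (simp add: le_fun_def madd_def)

lemma mabs_madd: "mabs n (madd \<alpha> \<beta>) = mabs n \<alpha> + mabs n \<beta>"
  by (simp add: mabs_def madd_def sum.distrib)

lemma parity_flip:
  assumes "j < n" "\<beta> j \<le> 1"
  shows "even (mabs n (\<beta>(j := 1 - \<beta> j))) \<longleftrightarrow> odd (mabs n \<beta>)"
proof -
  have split_j: "mabs n f = f j + (\<Sum>i\<in>{..<n}-{j}. f i)" for f
    unfolding mabs_def using assms(1) by (simp add: sum.remove)
  have "(\<Sum>i\<in>{..<n}-{j}. (\<beta>(j := 1 - \<beta> j)) i) = (\<Sum>i\<in>{..<n}-{j}. \<beta> i)"
    by (rule sum.cong) auto
  then show ?thesis using assms(2) unfolding split_j[of "\<beta>(j := 1 - \<beta> j)"] split_j[of \<beta>]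
    by (cases "\<beta> j") auto
qed

text \<open>The fibre of \<theta>: all \<beta> \<le> c of parity r (r = True meaning even) for which
  \<alpha> + \<beta> dominates \<theta>.  Its size is the multiplicity of h(\<theta>) in the double sum
  over \<beta> of parity r, once the order of summation is exchanged.\<close>

definition fibre :: "nat \<Rightarrow> (nat \<Rightarrow> nat) \<Rightarrow> (nat \<Rightarrow> nat) \<Rightarrow> (nat \<Rightarrow> nat) \<Rightarrow> bool \<Rightarrow> (nat \<Rightarrow> nat) set"
  where "fibre n \<alpha> c \<theta> r = {\<beta>. \<beta> \<le> c \<and> even (mabs n \<beta>) = r \<and> \<theta> \<le> madd \<alpha> \<beta>}"

lemma fibre_covered:
  assumes \<alpha>: "\<alpha> \<in> A0 n" and \<theta>: "\<theta> \<in> A0 n" and c: "c = mcompl n \<alpha>" and "c \<le> \<theta>"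
  shows "fibre n \<alpha> c \<theta> r = (if even (mabs n c) = r then {c} else {})"
proof -
  have sum1: "\<alpha> i + c i = mone n i" for i
    using fun_cong[OF madd_mcompl[OF \<alpha>], of i] by (simp add: c madd_def)
  have only_c: "\<beta> = c" if "\<beta> \<le> c" "\<theta> \<le> madd \<alpha> \<beta>" for \<beta>
  proof
    fix i
    have "c \<le> madd \<alpha> \<beta>" using \<open>c \<le> \<theta>\<close> that(2) by (rule order_trans)
    then have "\<beta> i \<le> c i" "c i \<le> \<alpha> i + \<beta> i"
      using that(1) by (simp_all add: le_fun_def madd_def)
    then show "\<beta> i = c i" using sum1[of i] by (auto simp: mone_def split: if_splits)
  qed
  have "\<theta> \<le> madd \<alpha> c"
    using \<theta> madd_mcompl[OF \<alpha>] by (simp add: A0_def c)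
  then show ?thesis using only_c by (auto simp: fibre_def)
qed

text \<open>If c_j = 1 and \<theta>_j = 0, flipping the j-th coordinate is a bijection between
  the even and the odd part of the fibre, so both have equal (constant) sums.\<close>

lemma fibre_flip:
  assumes c: "c \<in> A0 n" and cj: "c j = 1" and \<theta>j: "\<theta> j = 0"
  shows "osum.F (\<lambda>_. x) (fibre n \<alpha> c \<theta> r) = osum.F (\<lambda>_. x) (fibre n \<alpha> c \<theta> (\<not> r))"
proof -
  define \<tau> where "\<tau> \<beta> = \<beta>(j := 1 - \<beta> j)" for \<beta> :: "nat \<Rightarrow> nat"
  have j: "j < n" using c cj by (auto simp: A0_iff dest!: spec[of _ j] split: if_splits)
  have flip: "\<tau> \<beta> \<in> fibre n \<alpha> c \<theta> (\<not> s) \<and> \<tau> (\<tau> \<beta>) = \<beta>" if \<beta>: "\<beta> \<in> fibre n \<alpha> c \<theta> s" for \<beta> s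
  proof -
    have le: "\<beta> \<le> c" and par: "even (mabs n \<beta>) = s" and dom: "\<theta> \<le> madd \<alpha> \<beta>"
      using \<beta> by (auto simp: fibre_def)
    then have \<beta>j: "\<beta> j \<le> 1" using cj by (auto simp: le_fun_def dest: spec[of _ j])
    have "\<tau> \<beta> \<le> c" using le cj by (auto simp: \<tau>_def le_fun_def)
    moreover have "\<theta> \<le> madd \<alpha> (\<tau> \<beta>)" using dom \<theta>j by (auto simp: \<tau>_def le_fun_def madd_def)
    moreover have "even (mabs n (\<tau> \<beta>)) = (\<not> s)"
      using parity_flip[of j n \<beta>, OF j \<beta>j] par by (simp add: \<tau>_def)
    ultimately show ?thesis using \<beta>j by (auto simp: fibre_def \<tau>_def)
  qed
  show ?thesis
  proof (rule osum.reindex_bij_witness[where i = \<tau> and j = \<tau>])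
    fix \<beta> assume "\<beta> \<in> fibre n \<alpha> c \<theta> (\<not> r)"
    then show "\<tau> (\<tau> \<beta>) = \<beta>" "\<tau> \<beta> \<in> fibre n \<alpha> c \<theta> r" using flip[of \<beta> "\<not> r"] by simp_all
  next
    fix \<beta> assume "\<beta> \<in> fibre n \<alpha> c \<theta> r"
    then show "\<tau> (\<tau> \<beta>) = \<beta>" "\<tau> \<beta> \<in> fibre n \<alpha> c \<theta> (\<not> r)" using flip[of \<beta> r] by simp_all
  qed simp
qed

lemma fibre_count:
  assumes \<alpha>: "\<alpha> \<in> A0 n" and \<theta>: "\<theta> \<in> A0 n" and c: "c = mcompl n \<alpha>" and e: "e = even (mabs n c)"
  shows "opl (if c \<le> \<theta> then Some x else None) (osum.F (\<lambda>_. Some x) (fibre n \<alpha> c \<theta> (\<not> e)))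
       = osum.F (\<lambda>_. Some x) (fibre n \<alpha> c \<theta> e)"
proof (cases "c \<le> \<theta>")
  case True
  then show ?thesis using fibre_covered[OF \<alpha> \<theta> c] e by (simp add: opl_def)
next
  case False
  then obtain j where "\<not> c j \<le> \<theta> j" by (auto simp: le_fun_def)
  moreover have "c \<in> A0 n" using c mcompl_A0 by simp
  ultimately have "c j = 1" "\<theta> j = 0"
    using \<theta> by (auto simp: A0_iff dest!: spec[of _ j] split: if_splits)
  then show ?thesis using False fibre_flip[OF \<open>c \<in> A0 n\<close>, of j \<theta> "Some x" \<alpha> e]
    by (simp add: opl_def)
qed

text \<open>Proof: exchange the order of summation and compare the
  multiplicity of every h(\<theta>) by fibre_count.\<close>

lemma double_sum_parity_identity:
  fixes h :: "(nat \<Rightarrow> nat) \<Rightarrow> 'a::ab_semigroup_add"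
  assumes \<alpha>: "\<alpha> \<in> A0 n" and c: "c = mcompl n \<alpha>" and e: "e = even (mabs n c)"
  shows "opl (hsum h {\<theta>. c \<le> \<theta> \<and> \<theta> \<le> mone n \<and> Q (mabs n \<theta>)})
           (psum (\<lambda>\<beta>. hsum h {\<theta>. \<theta> \<le> madd \<alpha> \<beta> \<and> Q (mabs n \<theta>)})
                 {\<beta>. \<beta> \<le> c \<and> even (mabs n \<beta>) = (\<not> e)})
       = psum (\<lambda>\<beta>. hsum h {\<theta>. \<theta> \<le> madd \<alpha> \<beta> \<and> Q (mabs n \<theta>)})
              {\<beta>. \<beta> \<le> c \<and> even (mabs n \<beta>) = e}"
proof -
  define E where "E = {\<theta>. \<theta> \<in> A0 n \<and> Q (mabs n \<theta>)}"
  have finite_E: "finite E" unfolding E_def by (rule finite_subset[OF _ finite_A0]) auto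
  have c_A0: "c \<in> A0 n" using c mcompl_A0 by simp
  \<comment> \<open>Exchanging the order of summation: h(\<theta>) is counted once per fibre element.\<close>
  have exchange: "psum (\<lambda>\<beta>. hsum h {\<theta>. \<theta> \<le> madd \<alpha> \<beta> \<and> Q (mabs n \<theta>)})
                        {\<beta>. \<beta> \<le> c \<and> even (mabs n \<beta>) = r}
      = osum.F (\<lambda>\<theta>. osum.F (\<lambda>_. Some (h \<theta>)) (fibre n \<alpha> c \<theta> r)) E" for r
  proof -
    have inner: "{\<theta>. \<theta> \<le> madd \<alpha> \<beta> \<and> Q (mabs n \<theta>)} = {\<theta>. \<theta> \<in> E \<and> \<theta> \<le> madd \<alpha> \<beta>}"
      if "\<beta> \<le> c" for \<beta>
      using madd_mono[OF that, of \<alpha>] madd_mcompl[OF \<alpha>]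
      by (auto simp: E_def A0_def c intro: order_trans)
    have "psum (\<lambda>\<beta>. hsum h {\<theta>. \<theta> \<le> madd \<alpha> \<beta> \<and> Q (mabs n \<theta>)})
                {\<beta>. \<beta> \<le> c \<and> even (mabs n \<beta>) = r}
        = osum.F (\<lambda>\<beta>. osum.F (\<lambda>\<theta>. Some (h \<theta>)) {\<theta>. \<theta> \<in> E \<and> \<theta> \<le> madd \<alpha> \<beta>})
                 {\<beta>. \<beta> \<le> c \<and> even (mabs n \<beta>) = r}"
      unfolding psum_eq_osum hsum_eq_osum by (rule osum.cong) (simp_all add: inner)
    also have "\<dots> = osum.F (\<lambda>\<theta>. osum.F (\<lambda>_. Some (h \<theta>))
                        {\<beta>. \<beta> \<in> {\<beta>. \<beta> \<le> c \<and> even (mabs n \<beta>) = r} \<and> \<theta> \<le> madd \<alpha> \<beta>}) E"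
      by (rule osum.swap_restrict[OF finite_below_A0[OF c_A0] finite_E])
    finally show ?thesis by (simp add: fibre_def conj_assoc)
  qed
  have corner: "hsum h {\<theta>. c \<le> \<theta> \<and> \<theta> \<le> mone n \<and> Q (mabs n \<theta>)}
      = osum.F (\<lambda>\<theta>. if c \<le> \<theta> then Some (h \<theta>) else None) E"
  proof -
    have "{\<theta>. c \<le> \<theta> \<and> \<theta> \<le> mone n \<and> Q (mabs n \<theta>)} = {\<theta> \<in> E. c \<le> \<theta>}"
      by (auto simp: E_def A0_def)
    then show ?thesis unfolding hsum_eq_osum by (simp add: osum.inter_filter[OF finite_E])
  qed
  show ?thesis
    unfolding exchange corner osum.distrib[symmetric]
    by (rule osum.cong) (simp_all add: E_def fibre_count[OF \<alpha> _ c e])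
qed

lemma shift_sum:
  "osum.F (\<lambda>\<theta>. g (madd c \<theta>)) {\<theta>. \<theta> \<le> \<gamma> \<and> P (madd c \<theta>)}
     = osum.F g {\<theta>. c \<le> \<theta> \<and> \<theta> \<le> madd c \<gamma> \<and> P \<theta>}"
proof (rule osum.reindex_bij_witness[where i = "\<lambda>\<theta> i. \<theta> i - c i" and j = "madd c"])
  fix \<theta> assume "\<theta> \<in> {\<theta>. c \<le> \<theta> \<and> \<theta> \<le> madd c \<gamma> \<and> P \<theta>}"
  then have "c \<le> \<theta>" "\<theta> \<le> madd c \<gamma>" "P \<theta>" by simp_all
  moreover have "madd c (\<lambda>i. \<theta> i - c i) = \<theta>"
    using \<open>c \<le> \<theta>\<close> by (auto simp: madd_def le_fun_def)
  moreover have "(\<lambda>i. \<theta> i - c i) \<le> \<gamma>"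
    using \<open>\<theta> \<le> madd c \<gamma>\<close> by (auto simp: le_fun_def madd_def le_diff_conv add.commute)
  ultimately show "madd c (\<lambda>i. \<theta> i - c i) = \<theta>" "(\<lambda>i. \<theta> i - c i) \<in> {\<theta>. \<theta> \<le> \<gamma> \<and> P (madd c \<theta>)}"
    by simp_all
qed (auto simp: le_fun_def madd_def)

lemma shifted_corner_sum:
  fixes h :: "(nat \<Rightarrow> nat) \<Rightarrow> 'a::ab_semigroup_add"
  assumes \<alpha>: "\<alpha> \<in> A0 n" and c: "c = mcompl n \<alpha>" and "even (mabs n c)"
  shows "psum (\<lambda>\<theta>. Some (h (madd c \<theta>))) {\<theta>. \<theta> \<le> \<alpha> \<and> even (mabs n \<theta>) = r}
       = hsum h {\<theta>. c \<le> \<theta> \<and> \<theta> \<le> mone n \<and> even (mabs n \<theta>) = r}"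
proof -
  have "madd c \<alpha> = mone n"
    using madd_mcompl[OF \<alpha>] by (auto simp: c madd_def add.commute)
  moreover have "even (mabs n (madd c \<theta>)) = even (mabs n \<theta>)" for \<theta>
    using \<open>even (mabs n c)\<close> by (simp add: mabs_madd)
  ultimately show ?thesis
    using shift_sum[of "\<lambda>\<theta>. Some (h \<theta>)" c \<alpha> "\<lambda>\<theta>. even (mabs n \<theta>) = r"]
    by (simp add: psum_eq_osum hsum_eq_osum)
qed

theorem lemma7:
  fixes n :: nat and h :: "(nat \<Rightarrow> nat) \<Rightarrow> 'a::ab_semigroup_add" and \<alpha> :: "nat \<Rightarrow> nat"
  assumes "\<alpha> \<in> A0 n"
  shows "(even (mabs n (mcompl n \<alpha>)) \<longrightarrow>
      opl (psum (\<lambda>\<theta>. Some (h (madd (mcompl n \<alpha>) \<theta>))) (ev_le n \<alpha>))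
          (psum (\<lambda>\<beta>. hsum h (ev_le n (madd \<alpha> \<beta>))) (od_le n (mcompl n \<alpha>)))
        = psum (\<lambda>\<beta>. hsum h (ev_le n (madd \<alpha> \<beta>))) (ev_le n (mcompl n \<alpha>))
    \<and> opl (psum (\<lambda>\<theta>. Some (h (madd (mcompl n \<alpha>) \<theta>))) (od_le n \<alpha>))
          (psum (\<lambda>\<beta>. hsum h (od_le n (madd \<alpha> \<beta>))) (od_le n (mcompl n \<alpha>)))
        = psum (\<lambda>\<beta>. hsum h (od_le n (madd \<alpha> \<beta>))) (ev_le n (mcompl n \<alpha>)))
   \<and> (odd (mabs n (mcompl n \<alpha>)) \<longrightarrow>
      opl (hsum h {\<theta>. mcompl n \<alpha> \<le> \<theta> \<and> \<theta> \<le> mone n \<and> even (mabs n \<theta>)})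
          (psum (\<lambda>\<beta>. hsum h (ev_le n (madd \<alpha> \<beta>))) (ev_le n (mcompl n \<alpha>)))
        = psum (\<lambda>\<beta>. hsum h (ev_le n (madd \<alpha> \<beta>))) (od_le n (mcompl n \<alpha>))
    \<and> opl (hsum h {\<theta>. mcompl n \<alpha> \<le> \<theta> \<and> \<theta> \<le> mone n \<and> odd (mabs n \<theta>)})
          (psum (\<lambda>\<beta>. hsum h (od_le n (madd \<alpha> \<beta>))) (ev_le n (mcompl n \<alpha>)))
        = psum (\<lambda>\<beta>. hsum h (od_le n (madd \<alpha> \<beta>))) (od_le n (mcompl n \<alpha>)))"
proof -
  let ?c = "mcompl n \<alpha>"
  note identity = double_sum_parity_identity[OF assms refl refl, where h = h]
  have ev_set: "ev_le n \<gamma> = {\<theta>. \<theta> \<le> \<gamma> \<and> even (mabs n \<theta>) = True}"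
   and od_set: "od_le n \<gamma> = {\<theta>. \<theta> \<le> \<gamma> \<and> even (mabs n \<theta>) = False}" for \<gamma>
    by (simp_all add: ev_le_def od_le_def)
  show ?thesis
  proof (intro conjI impI)
    assume "even (mabs n ?c)"
    note corner = shifted_corner_sum[OF assms refl this, where h = h]
    show "opl (psum (\<lambda>\<theta>. Some (h (madd ?c \<theta>))) (ev_le n \<alpha>))
            (psum (\<lambda>\<beta>. hsum h (ev_le n (madd \<alpha> \<beta>))) (od_le n ?c))
          = psum (\<lambda>\<beta>. hsum h (ev_le n (madd \<alpha> \<beta>))) (ev_le n ?c)"
     and "opl (psum (\<lambda>\<theta>. Some (h (madd ?c \<theta>))) (od_le n \<alpha>))
            (psum (\<lambda>\<beta>. hsum h (od_le n (madd \<alpha> \<beta>))) (od_le n ?c))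
          = psum (\<lambda>\<beta>. hsum h (od_le n (madd \<alpha> \<beta>))) (ev_le n ?c)"
      using identity[of "\<lambda>k. even k"] identity[of "\<lambda>k. odd k"] corner[of True] corner[of False]
        \<open>even (mabs n ?c)\<close> by (simp_all add: ev_set od_set)
  next
    assume "odd (mabs n ?c)"
    then show "opl (hsum h {\<theta>. ?c \<le> \<theta> \<and> \<theta> \<le> mone n \<and> even (mabs n \<theta>)})
            (psum (\<lambda>\<beta>. hsum h (ev_le n (madd \<alpha> \<beta>))) (ev_le n ?c))
          = psum (\<lambda>\<beta>. hsum h (ev_le n (madd \<alpha> \<beta>))) (od_le n ?c)"
     and "opl (hsum h {\<theta>. ?c \<le> \<theta> \<and> \<theta> \<le> mone n \<and> odd (mabs n \<theta>)})
            (psum (\<lambda>\<beta>. hsum h (od_le n (madd \<alpha> \<beta>))) (ev_le n ?c))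
          = psum (\<lambda>\<beta>. hsum h (od_le n (madd \<alpha> \<beta>))) (od_le n ?c)"
      using identity[of "\<lambda>k. even k"] identity[of "\<lambda>k. odd k"] by (simp_all add: ev_set od_set)
  qed
qed

end
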